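(* Fix $k\in\mathbb{Z}_{\geq 0}$ and $X\in\{U,V\}$. For all integers $r$ and $i$: 1. $X_i^r$ is the disjoint union of the sets $X^r_{i,wc}$, $X^r_{i,\overline{wc},\mathrm{left}}$ and $X^r_{i,\overline{wc},\mathrm{right}}$. 2. There is a bijection between $X^r_{i,\overline{wc},\mathrm{right}}$ and $X^r_{i-1,\overline{wc},\mathrm{left}}$ which preserves the value of a word in $\mathcal{A}_k$ (i.e. a word and its image are equal as elements of $\mathcal{A}_k$). 3. The sets $X^r_{0,\overline{wc},\mathrm{right}}$, $V^r_{r-1,\overline{wc},\mathrm{left}}$, $U^r_{r-2,\overline{wc},\mathrm{left}}$, and $X^r_i$ for $i<0$, are empty.
   Context: Indices are elements of $\mathbb{Z}/(k+1)\mathbb{Z}$, identified with $[0,k]=\{0,\dots,k\}$. $\mathcal{A}_k$ is the associative $\mathbb{Z}$-algebra with generators $A_0,\dots,A_k$ subject only to $A_iA_{i+1}A_i=A_{i+1}A_iA_{i+1}$ for all $i$ and $A_iA_j=A_jA_i$ whenever $i-j\not\equiv\pm1 \pmod{k+1}$ (no relation is imposed on $A_i^2$). A word is a finite sequence $(i_1,\dots,i_m)$ of indices, written $A_{i_1\dots i_m}$; its value is $A_{i_1}\cdots A_{i_m}\in\mathcal{A}_k$, its weak length is $\widetilde{l}=m$, and its support $supp$ is the set $\{i_1,\dots,i_m\}$. For a proper subset $S\subsetneq[0,k]$, let $a$ be the smallest element of $[0,k]$ not in $S$; the canonical cyclic interval $I_S$ is the total order $a+1<a+2<\dots<k<0<1<\dots<a-1$.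 A word $u=A_{i_1\dots i_m}$ with $supp(u)$ a proper subset of $[0,k]$ is a weak hook word if, with respect to $I_{supp(u)}$, for some $j$ either (a) $i_1>\dots>i_j<i_{j+1}<\dots<i_m$ (hook type $V$; left side = letters $i_1,\dots,i_j$, right side = letters $i_j,\dots,i_m$), or (b) $i_1>\dots>i_j=i_{j+1}<\dots<i_m$ (hook type $U$; left side = $i_1,\dots,i_j$, right side = $i_{j+1},\dots,i_m$). $asc(u)$ is the number of $t$ with $i_t<i_{t+1}$ in $I_{supp(u)}$. The word $u$ is $k$-connected if $supp(u)$ is an interval of $I_{supp(u)}$. Otherwise, consider all pairs of letters $a<c$ of $u$ (in $I_{supp(u)}$) with $a\not\equiv c-1\pmod{k+1}$ and no letter $b$ of $u$ with $a<b<c$; let $u_{min}$ be the smallest such $c$; it occurs once or twice in $u$ (if twice, then once on each side). $u$ is $k$-weak connected if it is $k$-connected or $u_{min}$ occurs twice (on both sides). For $X\in\{U,V\}$: $X^r_i$ is the set of weak hook words of hook type $X$, weak length $r$ and $asc=i$; $X^r_{i,wc}$ is the subset of $k$-weak connected ones; $X^r_{i,\overline{wc},\mathrm{left}}$ (resp. $X^r_{i,\overline{wc},\mathrm{right}}$) is the subset of words that are not $k$-weak connected and whose unique occurrence of $u_{min}$ is on the left (resp. right) side. *)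

theory Defs
  imports Main
begin

text \<open>Elements of the free associative Z-algebra on A_0..A_k are represented as
finitely supported Z-valued functions on words (lists of indices).  We only need
the basis elements (words) and the two-sided ideal generated by the defining
relations.\<close>

definition wmono :: "nat list \<Rightarrow> (nat list \<Rightarrow> int)" where
  "wmono w = (\<lambda>x. if x = w then 1 else 0)"

definition ksucc :: "nat \<Rightarrow> nat \<Rightarrow> nat" where
  "ksucc k i = (i + 1) mod (k + 1)"

definition krels :: "nat \<Rightarrow> (nat list \<times> nat list) set" where
  "krels k =
     {([i, ksucc k i, i], [ksucc k i, i, ksucc k i]) | i. i \<le> k}
   \<union> {([i, j], [j, i]) | i j. i \<le> k \<and> j \<le> k \<and>
        (int i - int j) mod int (k + 1) \<noteq> 1 mod int (k + 1) \<and>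
        (int i - int j) mod int (k + 1) \<noteq> (-1) mod int (k + 1)}"

inductive_set kideal :: "nat \<Rightarrow> (nat list \<Rightarrow> int) set" for k where
  zero: "(\<lambda>_. 0) \<in> kideal k"
| step: "\<lbrakk> x \<in> kideal k; (p, q) \<in> krels k; set u \<subseteq> {0..k}; set v \<subseteq> {0..k} \<rbrakk>
         \<Longrightarrow> (\<lambda>w. x w + c * (wmono (u @ p @ v) w - wmono (u @ q @ v) w)) \<in> kideal k"

definition same_value :: "nat \<Rightarrow> nat list \<Rightarrow> nat list \<Rightarrow> bool" where
  "same_value k u v \<longleftrightarrow> (\<lambda>w. wmono u w - wmono v w) \<in> kideal k"

definition cmiss :: "nat \<Rightarrow> nat set \<Rightarrow> nat" where
  "cmiss k S = (LEAST a. a \<le> k \<and> a \<notin> S)"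

text \<open>Position of index x in the order a+1 < a+2 < ... < k < 0 < ... < a-1.\<close>
definition cpos :: "nat \<Rightarrow> nat set \<Rightarrow> nat \<Rightarrow> nat" where
  "cpos k S x = (x + k - cmiss k S) mod (k + 1)"

definition clt :: "nat \<Rightarrow> nat set \<Rightarrow> nat \<Rightarrow> nat \<Rightarrow> bool" where
  "clt k S x y \<longleftrightarrow> cpos k S x < cpos k S y"

datatype hooktype = U | V

text \<open>Hook of type V with bottom letter at (0-based) position j.\<close>
definition hookV :: "nat \<Rightarrow> nat list \<Rightarrow> nat \<Rightarrow> bool" where
  "hookV k u j \<longleftrightarrow> j < length u
     \<and> (\<forall>t. t < j \<longrightarrow> clt k (set u) (u ! (t+1)) (u ! t))
     \<and> (\<forall>t. j \<le> t \<and> t + 1 < length u \<longrightarrow> clt k (set u) (u ! t) (u ! (t+1)))"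

text \<open>Hook of type U with repeated letter at (0-based) positions j, j+1.\<close>
definition hookU :: "nat \<Rightarrow> nat list \<Rightarrow> nat \<Rightarrow> bool" where
  "hookU k u j \<longleftrightarrow> j + 1 < length u \<and> u ! j = u ! (j+1)
     \<and> (\<forall>t. t < j \<longrightarrow> clt k (set u) (u ! (t+1)) (u ! t))
     \<and> (\<forall>t. j + 1 \<le> t \<and> t + 1 < length u \<longrightarrow> clt k (set u) (u ! t) (u ! (t+1)))"

definition hook :: "hooktype \<Rightarrow> nat \<Rightarrow> nat list \<Rightarrow> nat \<Rightarrow> bool" where
  "hook X k u j = (case X of U \<Rightarrow> hookU k u j | V \<Rightarrow> hookV k u j)"

definition on_left :: "hooktype \<Rightarrow> nat \<Rightarrow> nat \<Rightarrow> bool" where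
  "on_left X j t \<longleftrightarrow> t \<le> j"

definition on_right :: "hooktype \<Rightarrow> nat \<Rightarrow> nat \<Rightarrow> bool" where
  "on_right X j t \<longleftrightarrow> (case X of V \<Rightarrow> j \<le> t | U \<Rightarrow> j + 1 \<le> t)"

definition asc :: "nat \<Rightarrow> nat list \<Rightarrow> nat" where
  "asc k u = card {t. t + 1 < length u \<and> clt k (set u) (u ! t) (u ! (t+1))}"

definition kconnected :: "nat \<Rightarrow> nat list \<Rightarrow> bool" where
  "kconnected k u \<longleftrightarrow> (\<forall>x\<in>set u. \<forall>y\<in>set u. \<forall>c\<le>k.
      cpos k (set u) x \<le> cpos k (set u) c \<and> cpos k (set u) c \<le> cpos k (set u) y
      \<longrightarrow> c \<in> set u)"

definition gap_tops :: "nat \<Rightarrow> nat list \<Rightarrow> nat set" where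
  "gap_tops k u = {c \<in> set u. \<exists>a\<in>set u. clt k (set u) a c
      \<and> (int a) mod int (k+1) \<noteq> (int c - 1) mod int (k+1)
      \<and> \<not> (\<exists>b\<in>set u. clt k (set u) a b \<and> clt k (set u) b c)}"

definition umin :: "nat \<Rightarrow> nat list \<Rightarrow> nat" where
  "umin k u = (THE c. c \<in> gap_tops k u \<and> (\<forall>c'\<in>gap_tops k u. cpos k (set u) c \<le> cpos k (set u) c'))"

definition weak_hook_word :: "hooktype \<Rightarrow> nat \<Rightarrow> nat list \<Rightarrow> bool" where
  "weak_hook_word X k u \<longleftrightarrow> set u \<subset> {0..k} \<and> (\<exists>j. hook X k u j)"

definition kweak_connected :: "nat \<Rightarrow> nat list \<Rightarrow> bool" where
  "kweak_connected k u \<longleftrightarrow> kconnected k u \<or> count_list u (umin k u) = 2"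

definition Xset :: "hooktype \<Rightarrow> nat \<Rightarrow> int \<Rightarrow> int \<Rightarrow> nat list set" where
  "Xset X k r i = {u. weak_hook_word X k u \<and> int (length u) = r \<and> int (asc k u) = i}"

definition Xwc :: "hooktype \<Rightarrow> nat \<Rightarrow> int \<Rightarrow> int \<Rightarrow> nat list set" where
  "Xwc X k r i = {u \<in> Xset X k r i. kweak_connected k u}"

definition Xleft :: "hooktype \<Rightarrow> nat \<Rightarrow> int \<Rightarrow> int \<Rightarrow> nat list set" where
  "Xleft X k r i = {u \<in> Xset X k r i. \<not> kweak_connected k u
      \<and> count_list u (umin k u) = 1
      \<and> (\<exists>j t. hook X k u j \<and> t < length u \<and> u ! t = umin k u \<and> on_left X j t)}"

definition Xright :: "hooktype \<Rightarrow> nat \<Rightarrow> int \<Rightarrow> int \<Rightarrow> nat list set" where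
  "Xright X k r i = {u \<in> Xset X k r i. \<not> kweak_connected k u
      \<and> count_list u (umin k u) = 1
      \<and> (\<exists>j t. hook X k u j \<and> t < length u \<and> u ! t = umin k u \<and> on_right X j t)}"

end

theory Submission
  imports Defs "HOL-Library.Multiset"
begin

(*
  Let u be a weak hook word that is not k-weakly connected and let c = umin k u be its minimal
  gap top.  Then c lies above the bottom letter of the hook and occurs exactly once, on the left
  or on the right side; which of the two decides whether u is counted in X_left or X_right.
  Since c is the top of a gap, the letter c - 1 does not occur in u, so every letter of u below c
  commutes with c in A_k.  Hence c may be moved between its slot on the left side and its slot
  on the right side, past the block of letters below c; this is a value-preserving bijection,
  and it changes asc by exactly one, because asc counts the letters of the right side after
  its first one.  The emptiness claims follow from the same count of ascents.
*)

lemma sorted_wrt_take_iff_nth: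
  assumes "transp R"
  shows "sorted_wrt R (take n xs) \<longleftrightarrow> (\<forall>t. t + 1 < n \<and> t + 1 < length xs \<longrightarrow> R (xs ! t) (xs ! (t + 1)))"
  unfolding sorted_wrt_iff_nth_Suc_transp[OF assms] by auto

lemma sorted_wrt_drop_iff_nth:
  assumes "transp R"
  shows "sorted_wrt R (drop n xs) \<longleftrightarrow> (\<forall>t. n \<le> t \<and> t + 1 < length xs \<longrightarrow> R (xs ! t) (xs ! (t + 1)))"
  unfolding sorted_wrt_iff_nth_Suc_transp[OF assms]
proof (intro iffI allI impI)
  fix t assume "\<forall>i. Suc i < length (drop n xs) \<longrightarrow> R (drop n xs ! i) (drop n xs ! Suc i)"
    and "n \<le> t \<and> t + 1 < length xs"
  then show "R (xs ! t) (xs ! (t + 1))" by (auto dest: spec[of _ "t - n"])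
qed auto

lemma sorted_wrt_irreflp_distinct: "sorted_wrt R xs \<Longrightarrow> (\<And>x. \<not> R x x) \<Longrightarrow> distinct xs"
  by (induction xs) auto

lemma sorted_wrt_split_at:
  fixes f :: "'a \<Rightarrow> 'b::linorder"
  assumes "sorted_wrt (\<lambda>x y. f x < f y) xs" "\<forall>x\<in>set xs. f x \<noteq> m"
  shows "\<exists>A B. xs = A @ B \<and> (\<forall>x\<in>set A. f x < m) \<and> (\<forall>x\<in>set B. m < f x)"
  using assms
proof (induction xs)
  case Nil
  then show ?case by simp
next
  case (Cons x xs)
  show ?case
  proof (cases "f x < m")
    case True
    then obtain A B where "xs = A @ B" "\<forall>x\<in>set A. f x < m" "\<forall>x\<in>set B. m < f x"
      using Cons by auto
    then show ?thesis using True by (intro exI[of _ "x # A"] exI[of _ B]) simp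
  next
    case False
    then have "m < f x" using Cons.prems(2) by auto
    then have "\<forall>y\<in>set (x # xs). m < f y" using Cons.prems(1) by auto
    then show ?thesis by (intro exI[of _ "[]"] exI[of _ "x # xs"]) simp
  qed
qed

definition insert_after_prefix :: "('a \<Rightarrow> bool) \<Rightarrow> 'a \<Rightarrow> 'a list \<Rightarrow> 'a list" where
  "insert_after_prefix P c xs = takeWhile P xs @ c # dropWhile P xs"

lemma insert_after_prefix_append:
  assumes "\<forall>x\<in>set A. P x" "B \<noteq> []" "\<not> P (hd B)"
  shows "insert_after_prefix P c (A @ B) = A @ c # B"
  using assms by (cases B) (simp_all add: insert_after_prefix_def)

section \<open>The cyclic order\<close>

lemma cmiss_le_notin:
  assumes "S \<subset> {0..k}"
  shows "cmiss k S \<le> k" "cmiss k S \<notin> S"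
proof -
  obtain a where "a \<le> k" "a \<notin> S" using psubset_imp_ex_mem[OF assms] by auto
  then have "cmiss k S \<le> k \<and> cmiss k S \<notin> S"
    unfolding cmiss_def by (rule LeastI[of "\<lambda>a. a \<le> k \<and> a \<notin> S", OF conjI])
  then show "cmiss k S \<le> k" "cmiss k S \<notin> S" by auto
qed

lemma cpos_formula:
  assumes "S \<subset> {0..k}" "x \<le> k"
  shows "cpos k S x = (if cmiss k S < x then x - cmiss k S - 1 else x + k - cmiss k S)"
proof -
  have "cmiss k S \<le> k" using cmiss_le_notin[OF assms(1)] by simp
  moreover have "(x + k - m) mod (k + 1) = x - m - 1" if "m < x" for m
  proof -
    have "x + k - m = x - m - 1 + (k + 1)" using that by simp
    moreover have "x - m - 1 < k + 1" using assms(2) by simp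
    ultimately show ?thesis by (metis mod_add_self2 mod_less)
  qed
  ultimately show ?thesis
    using assms(2) unfolding cpos_def by auto
qed

lemma cpos_inj:
  assumes "S \<subset> {0..k}" "x \<le> k" "y \<le> k" "cpos k S x = cpos k S y"
  shows "x = y"
  using assms cpos_formula[OF assms(1)] cmiss_le_notin[OF assms(1)] by (auto split: if_splits)

lemma cpos_eq_iff:
  assumes "S \<subset> {0..k}" "x \<in> S" "y \<in> S"
  shows "cpos k S x = cpos k S y \<longleftrightarrow> x = y"
proof -
  have "x \<le> k" "y \<le> k" using assms by auto
  then show ?thesis using cpos_inj[OF assms(1)] by blast
qed

lemma cpos_less_k:
  assumes "S \<subset> {0..k}" "x \<in> S"
  shows "cpos k S x < k"
  using assms cpos_formula[OF assms(1)] cmiss_le_notin[OF assms(1)]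
  by (cases "x = cmiss k S") (auto split: if_splits)

lemma transp_clt: "transp (clt k S)" "transp (\<lambda>x y. clt k S y x)"
  unfolding transp_def clt_def by auto

(* Letters of S sit at positions below k (position k is taken by cmiss k S), so the
   congruence x = c - 1 mod k + 1 is plain adjacency of positions, without wrap-around. *)
lemma cpos_adjacent_iff:
  assumes S: "S \<subset> {0..k}" and x: "x \<in> S" and c: "c \<le> k"
  shows "(int x - int c) mod int (k + 1) = (-1) mod int (k + 1)
     \<longleftrightarrow> cpos k S x + 1 = cpos k S c"
proof -
  define n where "n = int (k + 1)"
  define d where "d = int k - int (cmiss k S)"
  have cpos_int: "int (cpos k S y) = (int y + d) mod n" for y
    using cmiss_le_notin(1)[OF S] unfolding cpos_def d_def n_def
    by (simp add: zmod_int of_nat_diff add_diff_eq)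
  have "(int x - int c) mod n = (-1) mod n \<longleftrightarrow> (int x + d + 1) mod n = (int c + d) mod n"
    by (simp add: mod_eq_dvd_iff algebra_simps)
  also have "\<dots> \<longleftrightarrow> ((int x + d) mod n + 1) mod n = (int c + d) mod n"
    by (simp add: mod_add_left_eq)
  also have "\<dots> \<longleftrightarrow> (int (cpos k S x) + 1) mod n = int (cpos k S c)"
    unfolding cpos_int by simp
  also have "\<dots> \<longleftrightarrow> int (cpos k S x) + 1 = int (cpos k S c)"
    using cpos_less_k[OF S x] unfolding n_def by (simp add: mod_pos_pos_trivial)
  also have "\<dots> \<longleftrightarrow> cpos k S x + 1 = cpos k S c"
    by arith
  finally show ?thesis unfolding n_def .
qed

lemma krels_commuteI:
  assumes S: "S \<subset> {0..k}" and x: "x \<in> S" and c: "c \<in> S"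
    and "cpos k S x + 1 \<noteq> cpos k S c" "cpos k S c + 1 \<noteq> cpos k S x"
  shows "([x, c], [c, x]) \<in> krels k"
proof -
  define n where "n = int (k + 1)"
  have "x \<le> k" "c \<le> k" using S x c by auto
  have "(int x - int c) mod n = 1 mod n \<longleftrightarrow> n dvd (int x - int c - 1)"
    by (simp add: mod_eq_dvd_iff)
  also have "\<dots> \<longleftrightarrow> n dvd (int c - int x + 1)"
    using dvd_minus_iff[of n "int x - int c - 1"] by (simp add: algebra_simps)
  also have "\<dots> \<longleftrightarrow> (int c - int x) mod n = (-1) mod n"
    by (simp add: mod_eq_dvd_iff)
  finally have "(int x - int c) mod n \<noteq> 1 mod n" "(int x - int c) mod n \<noteq> (-1) mod n"
    using assms cpos_adjacent_iff[OF S x \<open>c \<le> k\<close>] cpos_adjacent_iff[OF S c \<open>x \<le> k\<close>]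
    unfolding n_def by auto
  then show ?thesis
    using \<open>x \<le> k\<close> \<open>c \<le> k\<close> unfolding krels_def n_def
    by (intro UnI2 CollectI exI[of _ x] exI[of _ c]) simp
qed

section \<open>Gap tops\<close>

lemma mem_gap_tops_iff:
  assumes S: "set u \<subset> {0..k}"
  defines "p \<equiv> cpos k (set u)"
  shows "c \<in> gap_tops k u \<longleftrightarrow> c \<in> set u \<and> (\<exists>a\<in>set u. p a < p c \<and> p a + 1 \<noteq> p c
           \<and> (\<forall>b\<in>set u. \<not> (p a < p b \<and> p b < p c)))"
proof -
  have "int a mod int (k + 1) = (int c - 1) mod int (k + 1) \<longleftrightarrow> p a + 1 = p c"
    if "a \<in> set u" "c \<in> set u" for a c
  proof -
    have "int a mod int (k + 1) = (int c - 1) mod int (k + 1)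
      \<longleftrightarrow> (int a - int c) mod int (k + 1) = (-1) mod int (k + 1)"
      by (simp add: mod_eq_dvd_iff algebra_simps)
    also have "\<dots> \<longleftrightarrow> p a + 1 = p c"
      using cpos_adjacent_iff[OF S that(1)] that(2) S unfolding p_def by auto
    finally show ?thesis .
  qed
  then show ?thesis unfolding gap_tops_def clt_def p_def by auto
qed

lemma gap_tops_nonempty:
  assumes S: "set u \<subset> {0..k}" and nc: "\<not> kconnected k u"
  shows "gap_tops k u \<noteq> {}"
proof -
  define p where "p = cpos k (set u)"
  have le: "z \<le> k" if "z \<in> set u" for z using S that by auto
  have p_neq: "p z \<noteq> p c0" if "z \<in> set u" "c0 \<le> k" "c0 \<notin> set u" for z c0
    using cpos_inj[OF S le[OF that(1)] that(2)] that unfolding p_def by blast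
  obtain x y c0 where xy: "x \<in> set u" "y \<in> set u" and c0: "c0 \<le> k" "c0 \<notin> set u"
    and "p x \<le> p c0" "p c0 \<le> p y"
    using nc unfolding kconnected_def p_def by blast
  moreover have "p x \<noteq> p c0" "p y \<noteq> p c0" using p_neq xy c0 by auto
  ultimately have x_below: "p x < p c0" and y_above: "p c0 < p y" by simp_all
  define L where "L = {z \<in> set u. p z < p c0}"
  define H where "H = {z \<in> set u. p c0 < p z}"
  have L: "finite (p ` L)" "p ` L \<noteq> {}" using xy x_below unfolding L_def by auto
  have H: "finite (p ` H)" "p ` H \<noteq> {}" using xy y_above unfolding H_def by auto
  obtain a where a: "a \<in> L" "p a = Max (p ` L)" using Max_in[OF L] by auto
  obtain c where c: "c \<in> H" "p c = Min (p ` H)" using Min_in[OF H] by auto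
  have "\<not> (p a < p b \<and> p b < p c)" if b: "b \<in> set u" for b
  proof -
    have "b \<in> L \<or> b \<in> H" using b p_neq[OF b c0] unfolding L_def H_def by auto
    moreover have "p b \<le> p a" if "b \<in> L" using that a(2) Max_ge[OF L(1)] by simp
    moreover have "p c \<le> p b" if "b \<in> H" using that c(2) Min_le[OF H(1)] by simp
    ultimately show ?thesis by auto
  qed
  moreover have "p a < p c0" "p c0 < p c" "a \<in> set u" "c \<in> set u"
    using a c unfolding L_def H_def by auto
  ultimately have "c \<in> gap_tops k u"
    unfolding mem_gap_tops_iff[OF S] p_def[symmetric] by (intro conjI bexI[of _ a]) auto
  then show ?thesis by auto
qed

lemma umin_in_gap_tops:
  assumes S: "set u \<subset> {0..k}" and nc: "\<not> kconnected k u"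
  shows "umin k u \<in> gap_tops k u"
proof -
  define p where "p = cpos k (set u)"
  define G where "G = gap_tops k u"
  have "G \<subseteq> set u" unfolding G_def gap_tops_def by auto
  then have G: "finite (p ` G)" "p ` G \<noteq> {}" "\<forall>c\<in>G. c \<le> k"
    using gap_tops_nonempty[OF S nc] S unfolding G_def by (auto intro: finite_subset)
  obtain c where c: "c \<in> G" "p c = Min (p ` G)" using Min_in[OF G(1,2)] by auto
  have "umin k u = c"
    unfolding umin_def G_def[symmetric] p_def[symmetric]
  proof (rule the_equality)
    show "c \<in> G \<and> (\<forall>c'\<in>G. p c \<le> p c')" using c Min_le[OF G(1)] by simp
    show "c' = c" if c': "c' \<in> G \<and> (\<forall>c''\<in>G. p c' \<le> p c'')" for c'
    proof -
      have "p c' \<le> p c" using c' c(1) by blast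
      moreover have "p c \<le> p c'" using c' c(2) Min_le[OF G(1), of "p c'"] by simp
      ultimately have "p c' = p c" by simp
      then show ?thesis using cpos_inj[OF S] G c' c(1) unfolding p_def by blast
    qed
  qed
  then show ?thesis using c unfolding G_def by simp
qed

(* Only the gap property of umin is used below, never its minimality.  A letter x below c
   with x = c - 1 would sit strictly between c and the bottom a of its gap. *)
lemma gap_top_commutes_below:
  assumes S: "set u \<subset> {0..k}" and c: "c \<in> gap_tops k u"
    and x: "x \<in> set u" "clt k (set u) x c"
  shows "([x, c], [c, x]) \<in> krels k"
proof -
  define p where "p = cpos k (set u)"
  obtain a where a: "c \<in> set u" "a \<in> set u" "p a < p c" "p a + 1 \<noteq> p c"
    "\<forall>b\<in>set u. \<not> (p a < p b \<and> p b < p c)"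
    using c unfolding mem_gap_tops_iff[OF S] p_def by blast
  have "p x < p c" using x(2) unfolding clt_def p_def .
  moreover have "p x + 1 \<noteq> p c"
  proof
    assume "p x + 1 = p c"
    moreover have "p x \<noteq> p a" using a(4) \<open>p x + 1 = p c\<close> by auto
    ultimately show False using a(3,5) x(1) by force
  qed
  ultimately show ?thesis using krels_commuteI[OF S x(1) a(1)] unfolding p_def by auto
qed

lemma umin_kconnected_set_cong:
  assumes "set u = set v"
  shows "umin k u = umin k v" "kconnected k u \<longleftrightarrow> kconnected k v"
  using assms unfolding umin_def gap_tops_def kconnected_def by simp_all

lemma kweak_connected_mset_cong:
  assumes "mset u = mset v"
  shows "kweak_connected k u \<longleftrightarrow> kweak_connected k v"
proof -
  have "set u = set v" using assms by (rule mset_eq_setD)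
  then show ?thesis
    using assms umin_kconnected_set_cong[of u v k] unfolding kweak_connected_def
    by (simp flip: count_mset)
qed

lemma kideal_add:
  assumes "x \<in> kideal k" "y \<in> kideal k"
  shows "(\<lambda>w. x w + y w) \<in> kideal k"
  using assms(2)
proof (induction y rule: kideal.induct)
  case zero
  then show ?case using assms(1) by simp
next
  case (step y p q u v c)
  have "(\<lambda>w. (x w + y w) + c * (wmono (u @ p @ v) w - wmono (u @ q @ v) w)) \<in> kideal k"
    using kideal.step[OF step.IH step.hyps(2-4)] .
  then show ?case by (simp add: algebra_simps)
qed

lemma same_value_refl: "same_value k u u"
  unfolding same_value_def using kideal.zero by simp

lemma same_value_trans:
  assumes "same_value k u v" "same_value k v w"
  shows "same_value k u w"
  using kideal_add[OF assms[unfolded same_value_def]] unfolding same_value_def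
  by (simp add: algebra_simps)

lemma same_value_commute:
  assumes "([x, c], [c, x]) \<in> krels k" "set A \<subseteq> {0..k}" "set B \<subseteq> {0..k}"
  shows "same_value k (A @ [x, c] @ B) (A @ [c, x] @ B)"
  using kideal.step[OF kideal.zero assms, where c = 1] unfolding same_value_def by simp

lemma same_value_move_past:
  assumes "\<forall>x\<in>set M. ([x, c], [c, x]) \<in> krels k" "set (A @ M @ B) \<subseteq> {0..k}"
  shows "same_value k (A @ M @ c # B) (A @ c # M @ B)"
  using assms
proof (induction M arbitrary: A)
  case Nil
  then show ?case using same_value_refl by simp
next
  case (Cons x M)
  have "same_value k ((A @ [x]) @ M @ c # B) ((A @ [x]) @ c # M @ B)"
    using Cons.IH[of "A @ [x]"] Cons.prems by simp
  moreover have "same_value k (A @ [x, c] @ M @ B) (A @ [c, x] @ M @ B)"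
    using same_value_commute[of x c k A "M @ B"] Cons.prems by simp
  ultimately show ?case using same_value_trans by fastforce
qed

section \<open>Hook decompositions\<close>

definition hook_bottom :: "hooktype \<Rightarrow> nat \<Rightarrow> nat list" where
  "hook_bottom X b = (case X of U \<Rightarrow> [b, b] | V \<Rightarrow> [b])"

(* The left side of the hook is D @ [b] and its right side is b # I; for hook type U the
   bottom letter b is written twice, once on each side. *)
definition hook_split :: "hooktype \<Rightarrow> nat \<Rightarrow> nat list \<Rightarrow> nat list \<Rightarrow> nat \<Rightarrow> nat list \<Rightarrow> bool" where
  "hook_split X k u D b I \<longleftrightarrow> u = D @ hook_bottom X b @ I
     \<and> sorted_wrt (\<lambda>x y. clt k (set u) y x) (D @ [b]) \<and> sorted_wrt (clt k (set u)) (b # I)"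

lemma set_hook_bottom [simp]: "set (hook_bottom X b) = {b}"
  by (cases X) (simp_all add: hook_bottom_def)

lemma length_hook_bottom_pos: "0 < length (hook_bottom X b)"
  by (cases X) (simp_all add: hook_bottom_def)

lemma hookV_iff_sorted:
  "hookV k u j \<longleftrightarrow> j < length u \<and> sorted_wrt (\<lambda>x y. clt k (set u) y x) (take (Suc j) u)
     \<and> sorted_wrt (clt k (set u)) (drop j u)"
  unfolding hookV_def sorted_wrt_take_iff_nth[OF transp_clt(2)]
    sorted_wrt_drop_iff_nth[OF transp_clt(1)]
  by auto

lemma hookU_iff_sorted:
  "hookU k u j \<longleftrightarrow> Suc j < length u \<and> u ! j = u ! Suc j
     \<and> sorted_wrt (\<lambda>x y. clt k (set u) y x) (take (Suc j) u)
     \<and> sorted_wrt (clt k (set u)) (drop (Suc j) u)"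
  unfolding hookU_def sorted_wrt_take_iff_nth[OF transp_clt(2)]
    sorted_wrt_drop_iff_nth[OF transp_clt(1)]
  by auto

lemma hook_iff_hook_split: "hook X k u j \<longleftrightarrow> (\<exists>D b I. hook_split X k u D b I \<and> length D = j)"
proof
  assume hook: "hook X k u j"
  show "\<exists>D b I. hook_split X k u D b I \<and> length D = j"
  proof (cases X)
    case U
    then have j: "Suc j < length u" "u ! j = u ! Suc j"
      and sorted: "sorted_wrt (\<lambda>x y. clt k (set u) y x) (take (Suc j) u)"
        "sorted_wrt (clt k (set u)) (drop (Suc j) u)"
      using hook unfolding hook_def hookU_iff_sorted by auto
    have "take (Suc j) u = take j u @ [u ! j]" "drop (Suc j) u = u ! j # drop (Suc (Suc j)) u"
      using j by (simp_all add: take_Suc_conv_app_nth Cons_nth_drop_Suc)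
    moreover have "u = take j u @ [u ! j, u ! j] @ drop (Suc (Suc j)) u"
      using j id_take_nth_drop[of j u] Cons_nth_drop_Suc[of "Suc j" u] by simp
    ultimately have "hook_split X k u (take j u) (u ! j) (drop (Suc (Suc j)) u)"
      using U sorted unfolding hook_split_def hook_bottom_def by simp
    then show ?thesis using j by force
  next
    case V
    then have j: "j < length u"
      and sorted: "sorted_wrt (\<lambda>x y. clt k (set u) y x) (take (Suc j) u)"
        "sorted_wrt (clt k (set u)) (drop j u)"
      using hook unfolding hook_def hookV_iff_sorted by auto
    have "take (Suc j) u = take j u @ [u ! j]" "drop j u = u ! j # drop (Suc j) u"
      using j by (simp_all add: take_Suc_conv_app_nth Cons_nth_drop_Suc)
    moreover have "u = take j u @ [u ! j] @ drop (Suc j) u"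
      using j id_take_nth_drop[of j u] by simp
    ultimately have "hook_split X k u (take j u) (u ! j) (drop (Suc j) u)"
      using V sorted unfolding hook_split_def hook_bottom_def by simp
    then show ?thesis using j by force
  qed
next
  assume "\<exists>D b I. hook_split X k u D b I \<and> length D = j"
  then obtain D b I where "hook_split X k u D b I" "length D = j" by blast
  then show "hook X k u j"
    unfolding hook_def hookU_iff_sorted hookV_iff_sorted hook_split_def hook_bottom_def
    by (cases X) (auto simp: nth_append)
qed

lemma set_hook_split:
  assumes "hook_split X k u D b I"
  shows "set u = insert b (set D \<union> set I)"
proof -
  have "u = D @ hook_bottom X b @ I" using assms unfolding hook_split_def by blast
  then show ?thesis by auto
qed

lemma hook_split_bottom_least:
  assumes "hook_split X k u D b I" "x \<in> set u" "x \<noteq> b"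
  shows "clt k (set u) b x"
  using assms unfolding hook_split_def by (auto simp: sorted_wrt_append)

lemma hook_split_count_list:
  assumes "hook_split X k u D b I" "c \<noteq> b"
  shows "count_list u c = (if c \<in> set D then 1 else 0) + (if c \<in> set I then 1 else 0)"
proof -
  have "distinct D" "distinct I"
    using assms(1)
      sorted_wrt_irreflp_distinct[where R = "\<lambda>x y. clt k (set u) y x" and xs = "D @ [b]"]
      sorted_wrt_irreflp_distinct[where R = "clt k (set u)" and xs = "b # I"]
    unfolding hook_split_def clt_def by auto
  then show ?thesis
    using assms unfolding hook_split_def by (simp add: distinct_count_atmost_1 flip: count_mset)
qed

lemma hook_split_unique:
  assumes "hook_split X k u D b I" "hook_split X k u D' b' I'"
  shows "D' = D" "b' = b" "I' = I"
proof -
  have "b \<in> set u" using assms(1) unfolding hook_split_def by simp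
  have "b' \<in> set u" using assms(2) unfolding hook_split_def by simp
  show "b' = b"
  proof (rule ccontr)
    assume "b' \<noteq> b"
    then have "clt k (set u) b b'" "clt k (set u) b' b"
      using hook_split_bottom_least[OF assms(1) \<open>b' \<in> set u\<close>]
        hook_split_bottom_least[OF assms(2) \<open>b \<in> set u\<close>] by auto
    then show False unfolding clt_def by simp
  qed
  have "b \<notin> set D" "b' \<notin> set D'"
    using assms unfolding hook_split_def clt_def by (auto simp: sorted_wrt_append)
  moreover have "takeWhile (\<lambda>x. x \<noteq> b) (D @ hook_bottom X b @ I) = D" if "b \<notin> set D" for D b I
    using that by (induction D) (auto simp: hook_bottom_def split: hooktype.split)
  ultimately have "takeWhile (\<lambda>x. x \<noteq> b) u = D" "takeWhile (\<lambda>x. x \<noteq> b') u = D'"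
    using assms unfolding hook_split_def by metis+
  then show "D' = D" using \<open>b' = b\<close> by simp
  then show "I' = I" using assms \<open>b' = b\<close> unfolding hook_split_def by simp
qed

lemma asc_hook_split:
  assumes split: "hook_split X k u D b I"
  shows "asc k u = length I"
proof -
  define r where "r = length D + length (hook_bottom X b) - 1"
  have hook: "hook X k u (length D)" using split hook_iff_hook_split by blast
  have no_ascent: "\<not> clt k (set u) (u ! t) (u ! (t + 1))" if "t < r" for t
  proof -
    have "u ! t = u ! (t + 1) \<or> clt k (set u) (u ! (t + 1)) (u ! t)"
    proof (cases X)
      case U
      then show ?thesis using hook that unfolding hook_def hookU_def r_def hook_bottom_def
        by (cases "t = length D") auto
    next
      case V
      then show ?thesis using hook that unfolding hook_def hookV_def r_def hook_bottom_def by auto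
    qed
    then show ?thesis unfolding clt_def by auto
  qed
  have ascent: "clt k (set u) (u ! t) (u ! (t + 1))" if "r \<le> t" "t + 1 < length u" for t
    using hook that unfolding hook_def hookU_def hookV_def r_def hook_bottom_def
    by (cases X) auto
  have "{t. t + 1 < length u \<and> clt k (set u) (u ! t) (u ! (t + 1))} = {r..<length u - 1}"
  proof (intro set_eqI iffI)
    fix t assume t: "t \<in> {t. t + 1 < length u \<and> clt k (set u) (u ! t) (u ! (t + 1))}"
    then have "\<not> t < r" using no_ascent by blast
    then show "t \<in> {r..<length u - 1}" using t by (simp add: less_diff_conv)
  next
    fix t assume "t \<in> {r..<length u - 1}"
    then have "r \<le> t" "t + 1 < length u" by (simp_all add: less_diff_conv)
    then show "t \<in> {t. t + 1 < length u \<and> clt k (set u) (u ! t) (u ! (t + 1))}"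
      using ascent by simp
  qed
  then have "asc k u = length u - 1 - r" unfolding asc_def by simp
  moreover have "length u = length D + length (hook_bottom X b) + length I"
    using split unfolding hook_split_def by simp
  ultimately show ?thesis using length_hook_bottom_pos[of X b] unfolding r_def by simp
qed

lemma on_right_iff: "on_right X j t \<longleftrightarrow> j + length (hook_bottom X b) \<le> t + 1"
  by (cases X) (auto simp: on_right_def hook_bottom_def)

lemma nth_hook_split_cases:
  assumes "hook_split X k u D b I" "t < length u" "u ! t \<noteq> b"
  shows "t < length D \<and> u ! t \<in> set D \<or> length D + length (hook_bottom X b) \<le> t \<and> u ! t \<in> set I"
proof -
  have u: "u = D @ hook_bottom X b @ I" using assms(1) unfolding hook_split_def by simp
  have "u ! t = b" if "length D \<le> t" "t < length D + length (hook_bottom X b)"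
  proof -
    have "t - length D < length (hook_bottom X b)" using that by arith
    then have "u ! t = hook_bottom X b ! (t - length D)"
      using that unfolding u by (simp add: nth_append)
    also have "\<dots> = b" using that by (cases X) (auto simp: hook_bottom_def nth_Cons')
    finally show ?thesis .
  qed
  then have "t \<notin> {length D..<length D + length (hook_bottom X b)}"
    using assms(3) by auto
  then show ?thesis using assms(2,3) unfolding u by (auto simp: nth_append)
qed

lemma umin_above_bottom:
  assumes split: "hook_split X k u D b I" and S: "set u \<subset> {0..k}" and nc: "\<not> kconnected k u"
  shows "umin k u \<in> set u" "umin k u \<noteq> b" "clt k (set u) b (umin k u)"
proof -
  obtain a where a: "a \<in> set u" "clt k (set u) a (umin k u)" and c: "umin k u \<in> set u"
    using umin_in_gap_tops[OF S nc] unfolding gap_tops_def by blast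
  show "umin k u \<in> set u" by (fact c)
  show "umin k u \<noteq> b"
  proof
    assume "umin k u = b"
    then have "a \<noteq> b" "clt k (set u) a b" using a unfolding clt_def by auto
    then show False using hook_split_bottom_least[OF split a(1)] unfolding clt_def by simp
  qed
  then show "clt k (set u) b (umin k u)" using hook_split_bottom_least[OF split c] by simp
qed

lemma Xset_not_kweak_connectedD:
  assumes "u \<in> Xset X k r i" "\<not> kweak_connected k u"
  shows "set u \<subset> {0..k}" "\<not> kconnected k u" "count_list u (umin k u) \<noteq> 2"
    "\<exists>D b I. hook_split X k u D b I"
proof -
  show "set u \<subset> {0..k}" using assms(1) unfolding Xset_def weak_hook_word_def by blast
  show "\<not> kconnected k u" "count_list u (umin k u) \<noteq> 2"
    using assms(2) unfolding kweak_connected_def by blast+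
  obtain j where "hook X k u j" using assms(1) unfolding Xset_def weak_hook_word_def by blast
  then show "\<exists>D b I. hook_split X k u D b I" using hook_iff_hook_split by blast
qed

lemma umin_occurs_once:
  assumes "u \<in> Xset X k r i" "\<not> kweak_connected k u" "hook_split X k u D b I"
  shows "count_list u (umin k u) = 1" "umin k u \<in> set D \<longleftrightarrow> umin k u \<notin> set I"
proof -
  note u = Xset_not_kweak_connectedD[OF assms(1,2)]
  note c = umin_above_bottom[OF assms(3) u(1,2)]
  have "umin k u \<in> set D \<or> umin k u \<in> set I" using c(1,2) assms(3) unfolding hook_split_def by auto
  then show "count_list u (umin k u) = 1" "umin k u \<in> set D \<longleftrightarrow> umin k u \<notin> set I"
    using u(3) hook_split_count_list[OF assms(3) c(2)] by auto
qed

lemma Xleft_iff: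
  "u \<in> Xleft X k r i \<longleftrightarrow> u \<in> Xset X k r i \<and> \<not> kweak_connected k u
     \<and> (\<exists>D b I. hook_split X k u D b I \<and> umin k u \<in> set D)"
proof
  assume u: "u \<in> Xleft X k r i"
  then have Xs: "u \<in> Xset X k r i" "\<not> kweak_connected k u" unfolding Xleft_def by auto
  obtain j t where "hook X k u j" and t: "t < length u" "u ! t = umin k u" "t \<le> j"
    using u unfolding Xleft_def on_left_def by blast
  then obtain D b I where split: "hook_split X k u D b I" "length D = j"
    using hook_iff_hook_split by blast
  have "u ! t \<noteq> b"
    using umin_above_bottom(2)[OF split(1) Xset_not_kweak_connectedD(1,2)[OF Xs]] t(2) by simp
  then have "umin k u \<in> set D"
    using nth_hook_split_cases[OF split(1) t(1)] length_hook_bottom_pos[of X b] t(2,3) split(2)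
    by auto
  then show "u \<in> Xset X k r i \<and> \<not> kweak_connected k u
     \<and> (\<exists>D b I. hook_split X k u D b I \<and> umin k u \<in> set D)"
    using Xs split by blast
next
  assume "u \<in> Xset X k r i \<and> \<not> kweak_connected k u
     \<and> (\<exists>D b I. hook_split X k u D b I \<and> umin k u \<in> set D)"
  then obtain D b I where u: "u \<in> Xset X k r i" "\<not> kweak_connected k u"
    and split: "hook_split X k u D b I" and c: "umin k u \<in> set D" by blast
  obtain t where t: "t < length D" "D ! t = umin k u" using c by (auto simp: in_set_conv_nth)
  then have "u ! t = umin k u" "t < length u" "t \<le> length D"
    using split unfolding hook_split_def by (auto simp: nth_append)
  moreover have "hook X k u (length D)" using split hook_iff_hook_split by blast
  ultimately show "u \<in> Xleft X k r i"
    using u umin_occurs_once(1)[OF u split] unfolding Xleft_def on_left_def by blast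
qed

lemma Xright_iff:
  "u \<in> Xright X k r i \<longleftrightarrow> u \<in> Xset X k r i \<and> \<not> kweak_connected k u
     \<and> (\<exists>D b I. hook_split X k u D b I \<and> umin k u \<in> set I)"
proof
  assume u: "u \<in> Xright X k r i"
  then have Xs: "u \<in> Xset X k r i" "\<not> kweak_connected k u" unfolding Xright_def by auto
  obtain j t where "hook X k u j" and t: "t < length u" "u ! t = umin k u" "on_right X j t"
    using u unfolding Xright_def by blast
  then obtain D b I where split: "hook_split X k u D b I" "length D = j"
    using hook_iff_hook_split by blast
  have "u ! t \<noteq> b"
    using umin_above_bottom(2)[OF split(1) Xset_not_kweak_connectedD(1,2)[OF Xs]] t(2) by simp
  moreover have "length D \<le> t"
    using t(3) split(2) length_hook_bottom_pos[of X b] unfolding on_right_iff[of X j t b]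
    by linarith
  ultimately have "umin k u \<in> set I"
    using nth_hook_split_cases[OF split(1) t(1)] t(2) by auto
  then show "u \<in> Xset X k r i \<and> \<not> kweak_connected k u
     \<and> (\<exists>D b I. hook_split X k u D b I \<and> umin k u \<in> set I)"
    using Xs split by blast
next
  assume "u \<in> Xset X k r i \<and> \<not> kweak_connected k u
     \<and> (\<exists>D b I. hook_split X k u D b I \<and> umin k u \<in> set I)"
  then obtain D b I where u: "u \<in> Xset X k r i" "\<not> kweak_connected k u"
    and split: "hook_split X k u D b I" and c: "umin k u \<in> set I" by blast
  obtain t where t: "t < length I" "I ! t = umin k u" using c by (auto simp: in_set_conv_nth)
  define t' where "t' = length D + length (hook_bottom X b) + t"
  have "u ! t' = umin k u" "t' < length u" "on_right X (length D) t'"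
    using split t on_right_iff[of X "length D" t' b] unfolding hook_split_def t'_def
    by (auto simp: nth_append)
  moreover have "hook X k u (length D)" using split hook_iff_hook_split by blast
  ultimately show "u \<in> Xright X k r i"
    using u umin_occurs_once(1)[OF u split] unfolding Xright_def by blast
qed

lemma Xset_eq_Un: "Xset X k r i = Xwc X k r i \<union> Xleft X k r i \<union> Xright X k r i"
proof
  show "Xset X k r i \<subseteq> Xwc X k r i \<union> Xleft X k r i \<union> Xright X k r i"
  proof
    fix u assume u: "u \<in> Xset X k r i"
    show "u \<in> Xwc X k r i \<union> Xleft X k r i \<union> Xright X k r i"
    proof (cases "kweak_connected k u")
      case True
      then show ?thesis using u unfolding Xwc_def by blast
    next
      case False
      note S = Xset_not_kweak_connectedD[OF u False]
      then obtain D b I where split: "hook_split X k u D b I" by blast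
      have "umin k u \<in> set D \<or> umin k u \<in> set I"
        using umin_above_bottom(1,2)[OF split S(1,2)] set_hook_split[OF split] by blast
      then show ?thesis
        using u False split Xleft_iff[of u X k r i] Xright_iff[of u X k r i] by blast
    qed
  qed
  show "Xwc X k r i \<union> Xleft X k r i \<union> Xright X k r i \<subseteq> Xset X k r i"
    unfolding Xwc_def Xleft_def Xright_def by blast
qed

lemma Xleft_Xright_disjoint: "Xleft X k r i \<inter> Xright X k r i = {}"
proof (intro equals0I)
  fix u assume "u \<in> Xleft X k r i \<inter> Xright X k r i"
  then have "u \<in> Xleft X k r i" "u \<in> Xright X k r i" by simp_all
  then obtain D b I D' b' I' where Xs: "u \<in> Xset X k r i" "\<not> kweak_connected k u"
    and split: "hook_split X k u D b I" "hook_split X k u D' b' I'"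
    and "umin k u \<in> set D" "umin k u \<in> set I'"
    unfolding Xleft_iff Xright_iff by blast
  moreover have "I' = I" using hook_split_unique(3)[OF split] .
  ultimately show False using umin_occurs_once(2)[OF Xs split(1)] by blast
qed

lemma Xright_asc_pos:
  assumes "u \<in> Xright X k r i"
  shows "0 < i"
proof -
  obtain D b I where Xs: "u \<in> Xset X k r i" and split: "hook_split X k u D b I"
    and "umin k u \<in> set I"
    using assms unfolding Xright_iff by blast
  then have "0 < asc k u" using asc_hook_split[OF split] by (cases I) auto
  then show ?thesis using Xs unfolding Xset_def by simp
qed

lemma Xleft_asc_bound:
  assumes "u \<in> Xleft X k r i"
  shows "i + (case X of U \<Rightarrow> 2 | V \<Rightarrow> 1) < r"
proof -
  obtain D b I where Xs: "u \<in> Xset X k r i" and split: "hook_split X k u D b I"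
    and "umin k u \<in> set D"
    using assms unfolding Xleft_iff by blast
  then have "0 < length D" by (cases D) auto
  moreover have "length u = length D + length (hook_bottom X b) + asc k u"
    using split asc_hook_split[OF split] unfolding hook_split_def by simp
  ultimately show ?thesis
    using Xs unfolding Xset_def hook_bottom_def by (cases X) auto
qed

section \<open>Moving the minimal gap top\<close>

definition hook_slots ::
  "nat \<Rightarrow> nat set \<Rightarrow> nat list \<Rightarrow> nat list \<Rightarrow> nat \<Rightarrow> nat list \<Rightarrow> nat list \<Rightarrow> nat \<Rightarrow> bool" where
  "hook_slots k S D1 D2 b I1 I2 c \<longleftrightarrow>
     sorted_wrt (\<lambda>x y. clt k S y x) (D1 @ D2 @ [b]) \<and> sorted_wrt (clt k S) (b # I1 @ I2)
     \<and> (\<forall>x \<in> set D1 \<union> set I2. clt k S c x) \<and> (\<forall>x \<in> set D2 \<union> {b} \<union> set I1. clt k S x c)"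

definition left_word ::
  "hooktype \<Rightarrow> nat list \<Rightarrow> nat list \<Rightarrow> nat \<Rightarrow> nat list \<Rightarrow> nat list \<Rightarrow> nat \<Rightarrow> nat list" where
  "left_word X D1 D2 b I1 I2 c = D1 @ c # D2 @ hook_bottom X b @ I1 @ I2"

definition right_word ::
  "hooktype \<Rightarrow> nat list \<Rightarrow> nat list \<Rightarrow> nat \<Rightarrow> nat list \<Rightarrow> nat list \<Rightarrow> nat \<Rightarrow> nat list" where
  "right_word X D1 D2 b I1 I2 c = D1 @ D2 @ hook_bottom X b @ I1 @ c # I2"

lemma mset_left_word: "mset (left_word X D1 D2 b I1 I2 c) = mset (right_word X D1 D2 b I1 I2 c)"
  by (simp add: left_word_def right_word_def)

lemma set_left_word: "set (left_word X D1 D2 b I1 I2 c) = set (right_word X D1 D2 b I1 I2 c)"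
  by (auto simp: left_word_def right_word_def)

lemma hook_slots_hook_split:
  assumes "hook_slots k S D1 D2 b I1 I2 c" "S = set (right_word X D1 D2 b I1 I2 c)"
  shows "hook_split X k (left_word X D1 D2 b I1 I2 c) (D1 @ c # D2) b (I1 @ I2)"
    "hook_split X k (right_word X D1 D2 b I1 I2 c) (D1 @ D2) b (I1 @ c # I2)"
  using assms unfolding hook_split_def hook_slots_def set_left_word
  by (auto simp: left_word_def right_word_def sorted_wrt_append clt_def)

lemma left_word_in_Xleft_iff:
  assumes slots: "hook_slots k (set (right_word X D1 D2 b I1 I2 c)) D1 D2 b I1 I2 c"
    and c: "umin k (right_word X D1 D2 b I1 I2 c) = c"
  shows "left_word X D1 D2 b I1 I2 c \<in> Xleft X k r i
     \<longleftrightarrow> right_word X D1 D2 b I1 I2 c \<in> Xright X k r (i + 1)"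
proof -
  define L where "L = left_word X D1 D2 b I1 I2 c"
  define R where "R = right_word X D1 D2 b I1 I2 c"
  note splits = hook_slots_hook_split[OF slots refl, folded L_def R_def]
  have set_eq: "set L = set R" and umin_L: "umin k L = c"
    using set_left_word umin_kconnected_set_cong(1) c unfolding L_def R_def by metis+
  have wc: "kweak_connected k L \<longleftrightarrow> kweak_connected k R"
    using kweak_connected_mset_cong[OF mset_left_word] unfolding L_def R_def .
  have "length L = length R" using mset_left_word unfolding L_def R_def by (metis size_mset)
  moreover have "asc k L = length (I1 @ I2)" "asc k R = length (I1 @ I2) + 1"
    using asc_hook_split[OF splits(1)] asc_hook_split[OF splits(2)] by simp_all
  moreover have "weak_hook_word X k L \<longleftrightarrow> weak_hook_word X k R"
    using splits set_eq hook_iff_hook_split unfolding weak_hook_word_def by blast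
  ultimately have "L \<in> Xset X k r i \<longleftrightarrow> R \<in> Xset X k r (i + 1)"
    unfolding Xset_def by auto
  moreover have "\<exists>D b I. hook_split X k L D b I \<and> umin k L \<in> set D"
    using splits(1) umin_L by (intro exI[of _ "D1 @ c # D2"] exI[of _ b] exI[of _ "I1 @ I2"]) simp
  moreover have "\<exists>D b I. hook_split X k R D b I \<and> umin k R \<in> set I"
    using splits(2) c unfolding R_def
    by (intro exI[of _ "D1 @ D2"] exI[of _ b] exI[of _ "I1 @ c # I2"]) simp
  ultimately show ?thesis
    unfolding Xleft_iff Xright_iff L_def[symmetric] R_def[symmetric] using wc by blast
qed

lemma Xright_right_word:
  assumes u: "u \<in> Xright X k r i"
  shows "\<exists>D1 D2 b I1 I2 c. u = right_word X D1 D2 b I1 I2 c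
           \<and> hook_slots k (set u) D1 D2 b I1 I2 c \<and> umin k u = c"
proof -
  define c where "c = umin k u"
  define p where "p = cpos k (set u)"
  obtain D b I where Xs: "u \<in> Xset X k r i" "\<not> kweak_connected k u"
    and split: "hook_split X k u D b I" and "c \<in> set I"
    using u unfolding Xright_iff c_def by blast
  have u_eq: "u = D @ hook_bottom X b @ I"
    and D_sorted: "sorted_wrt (\<lambda>x y. clt k (set u) y x) (D @ [b])"
    and I_sorted: "sorted_wrt (clt k (set u)) (b # I)"
    using split unfolding hook_split_def by blast+
  note S = Xset_not_kweak_connectedD(1,2)[OF Xs]
  note c = umin_above_bottom[OF split S, folded c_def]
  obtain I1 I2 where I: "I = I1 @ c # I2" using split_list[OF \<open>c \<in> set I\<close>] by blast
  have "c \<notin> set D" using umin_occurs_once(2)[OF Xs split] \<open>c \<in> set I\<close> c_def by blast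
  moreover have "x \<in> set u" if "x \<in> set D" for x using set_hook_split[OF split] that by blast
  ultimately have "\<forall>x\<in>set (rev D). p x \<noteq> p c"
    using cpos_eq_iff[OF S(1) _ c(1)] unfolding p_def by (metis set_rev)
  moreover have "sorted_wrt (\<lambda>x y. p x < p y) (rev D)"
    using D_sorted unfolding p_def clt_def by (simp add: sorted_wrt_append sorted_wrt_rev)
  ultimately obtain A B where "rev D = A @ B" and A: "\<forall>x\<in>set A. p x < p c"
    and B: "\<forall>x\<in>set B. p c < p x"
    using sorted_wrt_split_at[of p "rev D" "p c"] by blast
  then have D: "D = rev B @ rev A" by (metis rev_append rev_rev_ident)
  have "sorted_wrt (clt k (set u)) (b # I1 @ c # I2)" using I_sorted I by simp
  then have I12_sorted: "sorted_wrt (clt k (set u)) (b # I1 @ I2)"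
    and I1: "\<forall>x\<in>set I1. clt k (set u) x c" and I2: "\<forall>x\<in>set I2. clt k (set u) c x"
    by (auto simp: sorted_wrt_append)
  have "u = right_word X (rev B) (rev A) b I1 I2 c"
    using u_eq I D unfolding right_word_def by simp
  moreover have "hook_slots k (set u) (rev B) (rev A) b I1 I2 c"
    using D_sorted D I12_sorted A B I1 I2 c(3) unfolding hook_slots_def p_def clt_def
    by (simp add: ball_Un)
  ultimately show ?thesis unfolding c_def[symmetric] by blast
qed

lemma Xleft_left_word:
  assumes u: "u \<in> Xleft X k r i"
  shows "\<exists>D1 D2 b I1 I2 c. u = left_word X D1 D2 b I1 I2 c
           \<and> hook_slots k (set u) D1 D2 b I1 I2 c \<and> umin k u = c"
proof -
  define c where "c = umin k u"
  define p where "p = cpos k (set u)"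
  obtain D b I where Xs: "u \<in> Xset X k r i" "\<not> kweak_connected k u"
    and split: "hook_split X k u D b I" and "c \<in> set D"
    using u unfolding Xleft_iff c_def by blast
  have u_eq: "u = D @ hook_bottom X b @ I"
    and D_sorted: "sorted_wrt (\<lambda>x y. clt k (set u) y x) (D @ [b])"
    and I_sorted: "sorted_wrt (clt k (set u)) (b # I)"
    using split unfolding hook_split_def by blast+
  note S = Xset_not_kweak_connectedD(1,2)[OF Xs]
  note c = umin_above_bottom[OF split S, folded c_def]
  obtain D1 D2 where D: "D = D1 @ c # D2" using split_list[OF \<open>c \<in> set D\<close>] by blast
  have "c \<notin> set I" using umin_occurs_once(2)[OF Xs split] \<open>c \<in> set D\<close> c_def by blast
  moreover have "x \<in> set u" if "x \<in> set I" for x using set_hook_split[OF split] that by blast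
  ultimately have "\<forall>x\<in>set I. p x \<noteq> p c"
    using cpos_eq_iff[OF S(1) _ c(1)] unfolding p_def by metis
  moreover have "sorted_wrt (\<lambda>x y. p x < p y) I"
    using I_sorted unfolding p_def clt_def by simp
  ultimately obtain A B where I: "I = A @ B" and A: "\<forall>x\<in>set A. p x < p c"
    and B: "\<forall>x\<in>set B. p c < p x"
    using sorted_wrt_split_at[of p I "p c"] by blast
  have "sorted_wrt (\<lambda>x y. clt k (set u) y x) (D1 @ c # D2 @ [b])"
    using D_sorted D by simp
  then have D12_sorted: "sorted_wrt (\<lambda>x y. clt k (set u) y x) (D1 @ D2 @ [b])"
    and D1: "\<forall>x\<in>set D1. clt k (set u) c x" and D2: "\<forall>x\<in>set D2. clt k (set u) x c"
    by (auto simp: sorted_wrt_append)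
  have "u = left_word X D1 D2 b A B c"
    using u_eq I D unfolding left_word_def by simp
  moreover have "hook_slots k (set u) D1 D2 b A B c"
    using I_sorted I D12_sorted A B D1 D2 c(3) unfolding hook_slots_def p_def clt_def
    by (simp add: ball_Un)
  ultimately show ?thesis unfolding c_def[symmetric] by blast
qed

definition move_left :: "nat \<Rightarrow> nat list \<Rightarrow> nat list" where
  "move_left k u =
     insert_after_prefix (clt k (set u) (umin k u)) (umin k u) (removeAll (umin k u) u)"

(* Reversing the word turns the slot on the right side into one on the left side. *)
definition move_right :: "nat \<Rightarrow> nat list \<Rightarrow> nat list" where
  "move_right k u =
     rev (insert_after_prefix (clt k (set u) (umin k u)) (umin k u) (rev (removeAll (umin k u) u)))"

lemma move_left_right_word:
  assumes slots: "hook_slots k (set (right_word X D1 D2 b I1 I2 c)) D1 D2 b I1 I2 c"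
    and c: "umin k (right_word X D1 D2 b I1 I2 c) = c"
  shows "move_left k (right_word X D1 D2 b I1 I2 c) = left_word X D1 D2 b I1 I2 c"
    "move_right k (left_word X D1 D2 b I1 I2 c) = right_word X D1 D2 b I1 I2 c"
proof -
  define S where "S = set (right_word X D1 D2 b I1 I2 c)"
  define M where "M = D2 @ hook_bottom X b @ I1"
  have above: "\<forall>x\<in>set D1 \<union> set I2. clt k S c x" and below: "\<forall>x\<in>set M. clt k S x c"
    using slots unfolding hook_slots_def S_def M_def by auto
  then have "c \<notin> set D1" "c \<notin> set M" "c \<notin> set I2" unfolding clt_def by auto
  moreover have words: "right_word X D1 D2 b I1 I2 c = D1 @ M @ c # I2"
    "left_word X D1 D2 b I1 I2 c = D1 @ c # M @ I2"
    unfolding right_word_def left_word_def M_def by simp_all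
  ultimately have removed: "removeAll c (right_word X D1 D2 b I1 I2 c) = D1 @ M @ I2"
    "removeAll c (left_word X D1 D2 b I1 I2 c) = D1 @ M @ I2"
    by simp_all
  have "M \<noteq> []" unfolding M_def using length_hook_bottom_pos[of X b] by auto
  then have M: "M \<noteq> []" "hd M \<in> set M" "last M \<in> set M" by (simp_all add: hd_in_set last_in_set)
  then have "\<not> clt k S c (hd M)" "\<not> clt k S c (last M)"
    using below unfolding clt_def by (meson less_asym)+
  moreover have "umin k (left_word X D1 D2 b I1 I2 c) = c" "set (left_word X D1 D2 b I1 I2 c) = S"
    using c umin_kconnected_set_cong(1)[OF set_left_word] set_left_word unfolding S_def by metis+
  ultimately show "move_left k (right_word X D1 D2 b I1 I2 c) = left_word X D1 D2 b I1 I2 c"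
    "move_right k (left_word X D1 D2 b I1 I2 c) = right_word X D1 D2 b I1 I2 c"
    using above M(1) c removed
      insert_after_prefix_append[of D1 "clt k S c" "M @ I2" c]
      insert_after_prefix_append[of "rev I2" "clt k S c" "rev (D1 @ M)" c]
    unfolding move_left_def move_right_def S_def[symmetric]
    by (simp_all add: words hd_rev)
qed

lemma same_value_right_left_word:
  assumes slots: "hook_slots k (set (right_word X D1 D2 b I1 I2 c)) D1 D2 b I1 I2 c"
    and c: "umin k (right_word X D1 D2 b I1 I2 c) = c"
    and S: "set (right_word X D1 D2 b I1 I2 c) \<subset> {0..k}"
    and nc: "\<not> kconnected k (right_word X D1 D2 b I1 I2 c)"
  shows "same_value k (right_word X D1 D2 b I1 I2 c) (left_word X D1 D2 b I1 I2 c)"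
proof -
  define R where "R = right_word X D1 D2 b I1 I2 c"
  define M where "M = D2 @ hook_bottom X b @ I1"
  have below: "\<forall>x\<in>set M. clt k (set R) x c"
    using slots unfolding hook_slots_def R_def M_def by simp
  have "set M \<subseteq> set R" unfolding R_def M_def right_word_def by auto
  moreover have "c \<in> gap_tops k R" using umin_in_gap_tops[OF S nc] c unfolding R_def by simp
  ultimately have "\<forall>x\<in>set M. ([x, c], [c, x]) \<in> krels k"
    using below gap_top_commutes_below[OF S[folded R_def]] by blast
  moreover have "set (D1 @ M @ I2) \<subseteq> {0..k}" using S unfolding M_def right_word_def by auto
  ultimately have "same_value k (D1 @ M @ c # I2) (D1 @ c # M @ I2)"
    by (rule same_value_move_past)
  then show ?thesis unfolding M_def right_word_def left_word_def by simp
qed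

lemma bij_betw_move_left: "bij_betw (move_left k) (Xright X k r i) (Xleft X k r (i - 1))"
proof (rule bij_betw_byWitness[where f' = "move_right k"])
  have right: "move_left k u \<in> Xleft X k r (i - 1) \<and> move_right k (move_left k u) = u"
    if u_in: "u \<in> Xright X k r i" for u
  proof -
    obtain D1 D2 b I1 I2 c where u: "u = right_word X D1 D2 b I1 I2 c"
      and facts: "hook_slots k (set (right_word X D1 D2 b I1 I2 c)) D1 D2 b I1 I2 c"
        "umin k (right_word X D1 D2 b I1 I2 c) = c"
      using Xright_right_word[OF u_in] by blast
    show ?thesis
      using left_word_in_Xleft_iff[OF facts, of r "i - 1"] move_left_right_word[OF facts] u_in
      unfolding u by simp
  qed
  have left: "move_right k u \<in> Xright X k r i \<and> move_left k (move_right k u) = u"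
    if u_in: "u \<in> Xleft X k r (i - 1)" for u
  proof -
    obtain D1 D2 b I1 I2 c where u: "u = left_word X D1 D2 b I1 I2 c"
      and "hook_slots k (set u) D1 D2 b I1 I2 c" "umin k u = c"
      using Xleft_left_word[OF u_in] by blast
    then have facts: "hook_slots k (set (right_word X D1 D2 b I1 I2 c)) D1 D2 b I1 I2 c"
      "umin k (right_word X D1 D2 b I1 I2 c) = c"
      using umin_kconnected_set_cong(1)[OF set_left_word] set_left_word by metis+
    show ?thesis
      using left_word_in_Xleft_iff[OF facts, of r "i - 1"] move_left_right_word[OF facts] u_in
      unfolding u by simp
  qed
  show "\<forall>u\<in>Xright X k r i. move_right k (move_left k u) = u" using right by blast
  show "\<forall>u\<in>Xleft X k r (i - 1). move_left k (move_right k u) = u" using left by blast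
  show "move_left k ` Xright X k r i \<subseteq> Xleft X k r (i - 1)" using right by blast
  show "move_right k ` Xleft X k r (i - 1) \<subseteq> Xright X k r i" using left by blast
qed

lemma same_value_move_left:
  assumes "u \<in> Xright X k r i"
  shows "same_value k u (move_left k u)"
proof -
  obtain D1 D2 b I1 I2 c where u: "u = right_word X D1 D2 b I1 I2 c"
    and facts: "hook_slots k (set (right_word X D1 D2 b I1 I2 c)) D1 D2 b I1 I2 c"
      "umin k (right_word X D1 D2 b I1 I2 c) = c"
    using Xright_right_word[OF assms] by blast
  have "set u \<subset> {0..k}" "\<not> kconnected k u"
    using Xset_not_kweak_connectedD(1,2) assms unfolding Xright_def by blast+
  then show ?thesis
    using same_value_right_left_word[OF facts] move_left_right_word(1)[OF facts] unfolding u by simp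
qed

theorem lemma5p3:
  fixes k :: nat and X :: hooktype and r i :: int
  shows "(Xset X k r i = Xwc X k r i \<union> Xleft X k r i \<union> Xright X k r i
          \<and> Xwc X k r i \<inter> Xleft X k r i = {}
          \<and> Xwc X k r i \<inter> Xright X k r i = {}
          \<and> Xleft X k r i \<inter> Xright X k r i = {})
       \<and> (\<exists>f. bij_betw f (Xright X k r i) (Xleft X k r (i - 1))
              \<and> (\<forall>u \<in> Xright X k r i. same_value k u (f u)))
       \<and> Xright X k r 0 = {}
       \<and> Xleft V k r (r - 1) = {}
       \<and> Xleft U k r (r - 2) = {}
       \<and> (i < 0 \<longrightarrow> Xset X k r i = {})"
proof (intro conjI)
  show "Xset X k r i = Xwc X k r i \<union> Xleft X k r i \<union> Xright X k r i" by (rule Xset_eq_Un)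
  show "Xwc X k r i \<inter> Xleft X k r i = {}" "Xwc X k r i \<inter> Xright X k r i = {}"
    unfolding Xwc_def Xleft_def Xright_def by blast+
  show "Xleft X k r i \<inter> Xright X k r i = {}" by (rule Xleft_Xright_disjoint)
  show "\<exists>f. bij_betw f (Xright X k r i) (Xleft X k r (i - 1))
          \<and> (\<forall>u \<in> Xright X k r i. same_value k u (f u))"
    using bij_betw_move_left same_value_move_left by blast
  show "Xright X k r 0 = {}" using Xright_asc_pos by blast
  show "Xleft V k r (r - 1) = {}" "Xleft U k r (r - 2) = {}"
    using Xleft_asc_bound by fastforce+
  show "i < 0 \<longrightarrow> Xset X k r i = {}" unfolding Xset_def by auto
qed

end
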